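(* Let $m,n\in\mathbb N$, $M_A=M_m(\mathbb C)$, $M_B=M_n(\mathbb C)$, let $U_A\in M_A$, $U_B\in M_B$ be unitary matrices, and let $\{e_{ij}:1\le i,j\le m\}$ be the matrix units of $M_m(\mathbb C)$. A linear map $\psi:M_A\to M_B$ is $(U_A,U_B)$-CP if and only if the block matrix $[U_B^*\psi(U_Ae_{ij})]_{1\le i,j\le m}\in M_m(M_n(\mathbb C))$ is positive semidefinite.
   Context: For $k\in\mathbb N$ and a unitary $U$, write $U^k=\mathrm{diag}(U,\dots,U)$. A linear map $\psi:M_A\to M_B$ is $(U_A,U_B)$-CP if for every $k\in\mathbb N$ and every $V=[V_{ij}]\in M_k(M_A)$ with $(U_A^k)^*V\ge0$, one has $(U_B^k)^*[\psi(V_{ij})]\ge0$. *)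

theory Defs
  imports "Jordan_Normal_Form.Matrix"
begin

definition adj :: "complex mat \<Rightarrow> complex mat" where
  "adj A = mat (dim_col A) (dim_row A) (\<lambda>(i,j). cnj (A $$ (j,i)))"

definition unitary_mat :: "nat \<Rightarrow> complex mat \<Rightarrow> bool" where
  "unitary_mat n U \<longleftrightarrow> U \<in> carrier_mat n n \<and> adj U * U = 1\<^sub>m n \<and> U * adj U = 1\<^sub>m n"

definition psd :: "nat \<Rightarrow> complex mat \<Rightarrow> bool" where
  "psd N X \<longleftrightarrow> X \<in> carrier_mat N N \<and> adj X = X \<and>
     (\<forall>v :: nat \<Rightarrow> complex. 0 \<le> Re (\<Sum>i<N. \<Sum>j<N. cnj (v i) * X $$ (i,j) * v j))"

definition block :: "nat \<Rightarrow> nat \<Rightarrow> (nat \<Rightarrow> nat \<Rightarrow> complex mat) \<Rightarrow> complex mat" where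
  "block k m V = mat (k*m) (k*m) (\<lambda>(i,j). V (i div m) (j div m) $$ (i mod m, j mod m))"

(* U^k = diag(U,...,U), k copies *)
definition blockdiag :: "nat \<Rightarrow> nat \<Rightarrow> complex mat \<Rightarrow> complex mat" where
  "blockdiag k m U = block k m (\<lambda>i j. if i = j then U else 0\<^sub>m m m)"

(* matrix unit e_ij in M_m (0-based indices) *)
definition unit_mat :: "nat \<Rightarrow> nat \<Rightarrow> nat \<Rightarrow> complex mat" where
  "unit_mat m i j = mat m m (\<lambda>(a,b). if a = i \<and> b = j then 1 else 0)"

definition lin_map :: "nat \<Rightarrow> nat \<Rightarrow> (complex mat \<Rightarrow> complex mat) \<Rightarrow> bool" where
  "lin_map m n \<psi> \<longleftrightarrow>
     (\<forall>A \<in> carrier_mat m m. \<psi> A \<in> carrier_mat n n) \<and>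
     (\<forall>A \<in> carrier_mat m m. \<forall>B \<in> carrier_mat m m. \<psi> (A + B) = \<psi> A + \<psi> B) \<and>
     (\<forall>c. \<forall>A \<in> carrier_mat m m. \<psi> (c \<cdot>\<^sub>m A) = c \<cdot>\<^sub>m \<psi> A)"

definition UCP :: "nat \<Rightarrow> nat \<Rightarrow> complex mat \<Rightarrow> complex mat \<Rightarrow> (complex mat \<Rightarrow> complex mat) \<Rightarrow> bool" where
  "UCP m n UA UB \<psi> \<longleftrightarrow>
     (\<forall>k. \<forall>V :: nat \<Rightarrow> nat \<Rightarrow> complex mat.
        (\<forall>i<k. \<forall>j<k. V i j \<in> carrier_mat m m) \<and>
        psd (k*m) (adj (blockdiag k m UA) * block k m V) \<longrightarrow>
        psd (k*n) (adj (blockdiag k n UB) * block k n (\<lambda>i j. \<psi> (V i j))))"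

end

theory Submission
  imports Defs
begin

text \<open>
  Put \<open>\<phi> X = U\<^sub>B\<^sup>* \<psi> (U\<^sub>A X)\<close>. Blockwise \<open>(U\<^sup>k)\<^sup>* [V i j] = [U\<^sup>* V i j]\<close>, and \<open>U\<^sub>A\<close> is
  invertible, so \<open>\<psi>\<close> is \<open>(U\<^sub>A, U\<^sub>B)\<close>-CP exactly when \<open>\<phi>\<close> is completely positive, and the claim
  is Choi's theorem for \<open>\<phi>\<close>. Necessity: \<open>[e i j]\<close> is the rank-one matrix \<open>\<xi> \<xi>\<^sup>*\<close> with
  \<open>\<xi> = \<Sum>\<^sub>i e\<^sub>i \<otimes> e\<^sub>i\<close>. Sufficiency: \<open>[\<phi> (W i j)]\<close> has the entries
  \<open>\<Sum>\<^sub>a\<^sub>,\<^sub>b W (i, a) (j, b) * C (a, p) (b, q)\<close>, where \<open>C = [\<phi> (e a b)]\<close> is the Choi matrix.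
  Writing \<open>C = \<Sum>\<^sub>r c\<^sub>r c\<^sub>r\<^sup>*\<close> as a Gram matrix (by a Cholesky-type induction), the quadratic
  form of \<open>[\<phi> (W i j)]\<close> at \<open>v\<close> becomes a sum over \<open>r\<close> of quadratic forms of \<open>W\<close> at vectors
  built from \<open>v\<close> and \<open>c\<^sub>r\<close>, each of them nonnegative.
\<close>

section \<open>Positive semidefinite forms on finite index sets\<close>

text \<open>
  Forms are indexed by an arbitrary set rather than by \<open>{..<N}\<close>, so that a block matrix in
  \<open>M\<^sub>k(M\<^sub>m)\<close> can be handled as a form indexed by pairs (block, entry).
\<close>

definition qform :: "'a set \<Rightarrow> ('a \<Rightarrow> 'a \<Rightarrow> complex) \<Rightarrow> ('a \<Rightarrow> complex) \<Rightarrow> complex" where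
  "qform S X v = (\<Sum>i\<in>S. \<Sum>j\<in>S. cnj (v i) * X i j * v j)"

definition psd_on :: "'a set \<Rightarrow> ('a \<Rightarrow> 'a \<Rightarrow> complex) \<Rightarrow> bool" where
  "psd_on S X \<longleftrightarrow> (\<forall>i\<in>S. \<forall>j\<in>S. X j i = cnj (X i j)) \<and> (\<forall>v. 0 \<le> Re (qform S X v))"

lemma psd_onD:
  assumes "psd_on S X"
  shows psd_on_hermitian: "i \<in> S \<Longrightarrow> j \<in> S \<Longrightarrow> X j i = cnj (X i j)"
    and psd_on_qform_nonneg: "0 \<le> Re (qform S X v)"
  using assms unfolding psd_on_def by blast+

lemma qform_cong:
  "(\<And>i j. i \<in> S \<Longrightarrow> j \<in> S \<Longrightarrow> X i j = Y i j) \<Longrightarrow> (\<And>i. i \<in> S \<Longrightarrow> v i = w i) \<Longrightarrow>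
    qform S X v = qform S Y w"
  unfolding qform_def by (intro sum.cong refl) simp

lemma psd_on_cong:
  "(\<And>i j. i \<in> S \<Longrightarrow> j \<in> S \<Longrightarrow> X i j = Y i j) \<Longrightarrow> psd_on S X \<longleftrightarrow> psd_on S Y"
  unfolding psd_on_def using qform_cong[of S X Y] by (metis (no_types, lifting))

lemma qform_add: "qform S (\<lambda>i j. A i j + B i j) v = qform S A v + qform S B v"
  unfolding qform_def by (simp add: algebra_simps sum.distrib)

lemma qform_sum:
  "qform S (\<lambda>i j. \<Sum>r\<in>R. F r i j) v = (\<Sum>r\<in>R. qform S (F r) v)"
  unfolding qform_def by (simp add: sum_distrib_left sum_distrib_right sum.swap[of _ R] mult_ac)

lemma qform_insert:
  assumes "finite S" "x \<notin> S"
  shows "qform (insert x S) X v = qform S X v + cnj (v x) * (\<Sum>j\<in>S. X x j * v j)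
     + (\<Sum>i\<in>S. cnj (v i) * X i x) * v x + cnj (v x) * X x x * v x"
  using assms by (simp add: qform_def sum.distrib sum_distrib_left sum_distrib_right algebra_simps)

lemma qform_supported:
  assumes "finite S" "T \<subseteq> S" "\<And>i. i \<in> S - T \<Longrightarrow> v i = 0"
  shows "qform S X v = qform T X v"
proof -
  have "qform S X v = (\<Sum>i\<in>T. \<Sum>j\<in>S. cnj (v i) * X i j * v j)"
    unfolding qform_def by (rule sum.mono_neutral_right) (use assms in auto)
  also have "\<dots> = qform T X v"
    unfolding qform_def by (intro sum.cong refl sum.mono_neutral_right) (use assms in auto)
  finally show ?thesis .
qed

lemma qform_rank_one:
  "qform S (\<lambda>i j. u i * cnj (u j)) v = (\<Sum>i\<in>S. cnj (v i) * u i) * cnj (\<Sum>j\<in>S. cnj (v j) * u j)"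
  unfolding qform_def cnj_sum sum_product by (intro sum.cong refl) (simp add: ac_simps)

lemma psd_on_rank_one: "psd_on S (\<lambda>i j. u i * cnj (u j))"
proof -
  have nonneg: "0 \<le> Re (z * cnj z)" for z :: complex
    by (simp add: complex_mult_cnj)
  show ?thesis
    unfolding psd_on_def
  proof (intro conjI ballI allI)
    show "0 \<le> Re (qform S (\<lambda>i j. u i * cnj (u j)) v)" for v
      unfolding qform_rank_one by (rule nonneg)
  qed simp
qed

lemma qform_reindex:
  assumes "bij_betw h T S"
  shows "qform T (\<lambda>i j. X (h i) (h j)) (\<lambda>i. v (h i)) = qform S X v"
proof -
  have "(\<Sum>j\<in>T. cnj (v (h i)) * X (h i) (h j) * v (h j)) = (\<Sum>j\<in>S. cnj (v (h i)) * X (h i) j * v j)" for i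
    by (rule sum.reindex_bij_betw[OF assms])
  then show ?thesis
    unfolding qform_def
    using sum.reindex_bij_betw[OF assms, of "\<lambda>i. \<Sum>j\<in>S. cnj (v i) * X i j * v j"] by simp
qed

lemma psd_on_reindex:
  assumes h: "bij_betw h T S"
  shows "psd_on T (\<lambda>i j. X (h i) (h j)) \<longleftrightarrow> psd_on S X"
proof
  assume psd: "psd_on T (\<lambda>i j. X (h i) (h j))"
  show "psd_on S X"
    unfolding psd_on_def
  proof (intro conjI ballI allI)
    fix i j assume "i \<in> S" "j \<in> S"
    then obtain i' j' where "i' \<in> T" "j' \<in> T" "i = h i'" "j = h j'"
      using h by (metis bij_betw_imp_surj_on imageE)
    then show "X j i = cnj (X i j)"
      using psd_on_hermitian[OF psd] by blast
  next
    fix v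
    show "0 \<le> Re (qform S X v)"
      using psd_on_qform_nonneg[OF psd] qform_reindex[OF h] by metis
  qed
next
  assume psd: "psd_on S X"
  show "psd_on T (\<lambda>i j. X (h i) (h j))"
    unfolding psd_on_def
  proof (intro conjI ballI allI)
    fix i j assume "i \<in> T" "j \<in> T"
    then show "X (h j) (h i) = cnj (X (h i) (h j))"
      using psd_on_hermitian[OF psd] h by (meson bij_betwE)
  next
    fix u :: "_ \<Rightarrow> complex"
    define v where "v = (\<lambda>s. u (inv_into T h s))"
    have "qform T (\<lambda>i j. X (h i) (h j)) u = qform T (\<lambda>i j. X (h i) (h j)) (\<lambda>i. v (h i))"
      unfolding v_def using bij_betw_inv_into_left[OF h] by (intro qform_cong) simp_all
    then show "0 \<le> Re (qform T (\<lambda>i j. X (h i) (h j)) u)"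
      using psd_on_qform_nonneg[OF psd, of v] qform_reindex[OF h] by simp
  qed
qed

section \<open>Gram decomposition\<close>

lemma psd_on_diag:
  assumes "psd_on S X" "finite S" "x \<in> S"
  shows "X x x = of_real (Re (X x x))" "0 \<le> Re (X x x)"
proof -
  show "X x x = of_real (Re (X x x))"
    using psd_on_hermitian[OF assms(1,3,3)] by (simp add: complex_eq_iff)
  have "qform S X (\<lambda>i. if i = x then 1 else 0) = X x x"
    using assms(2,3) by (subst qform_supported[where T="{x}"]) (auto simp: qform_def)
  then show "0 \<le> Re (X x x)"
    using psd_on_qform_nonneg[OF assms(1), of "\<lambda>i. if i = x then 1 else 0"] by simp
qed

lemma psd_on_zero_diag_row:
  assumes psd: "psd_on S X" and "finite S" "x \<in> S" "j \<in> S" and zero: "X x x = 0"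
  shows "X x j = 0"
proof (rule ccontr)
  assume nz: "X x j \<noteq> 0"
  then have "x \<noteq> j" using zero by auto
  define z where "z = X x j"
  define R where "R = (Re (X j j) + 1) / (2 * (cmod z)\<^sup>2)"
  define t where "t = - of_real R * z"
  define v where "v i = (if i = x then t else if i = j then 1 else 0)" for i
  have zz: "cnj z * z = of_real ((cmod z)\<^sup>2)"
    by (metis complex_norm_square mult.commute of_real_power)
  have "qform S X v = cnj t * X x x * t + cnj t * X x j + X j x * t + X j j"
    using assms \<open>x \<noteq> j\<close>
    by (subst qform_supported[where T="{x,j}"]) (auto simp: v_def qform_def)
  also have "\<dots> = X j j - of_real (2 * R * (cmod z)\<^sup>2)"
    using zero zz psd_on_hermitian[OF psd \<open>x \<in> S\<close> \<open>j \<in> S\<close>]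
    unfolding t_def z_def[symmetric] by (simp add: algebra_simps)
  also have "2 * R * (cmod z)\<^sup>2 = Re (X j j) + 1"
    using nz unfolding R_def z_def by simp
  finally have "Re (qform S X v) = -1"
    by simp
  then show False
    using psd_on_qform_nonneg[OF psd, of v] by simp
qed

lemma psd_on_column_factor:
  assumes psd: "psd_on S X" and "finite S" "x \<in> S"
  obtains c where "\<And>j. j \<in> S \<Longrightarrow> X x j = c x * cnj (c j)" and "\<And>i. i \<in> S \<Longrightarrow> X i x = c i * cnj (c x)"
    and "c x = 0 \<Longrightarrow> c = (\<lambda>_. 0)"
proof -
  define s where "s = sqrt (Re (X x x))"
  \<comment> \<open>If \<open>X x x = 0\<close> this is the zero vector, since \<open>z / 0 = 0\<close>; the row of \<open>x\<close> then vanishes too.\<close>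
  define c where "c i = X i x / of_real s" for i
  have "X x x = of_real (s\<^sup>2)"
    using psd_on_diag[OF assms] unfolding s_def by simp
  then have cx: "c x = of_real s"
    unfolding c_def by (cases "s = 0") (simp_all add: power2_eq_square)
  have row: "X x j = c x * cnj (c j)" if "j \<in> S" for j
  proof (cases "s = 0")
    case True
    then show ?thesis
      using psd_on_zero_diag_row[OF assms that] \<open>X x x = of_real (s\<^sup>2)\<close> by (simp add: c_def)
  next
    case False
    then show ?thesis
      using psd_on_hermitian[OF psd that \<open>x \<in> S\<close>] \<open>X x x = of_real (s\<^sup>2)\<close>
      by (simp add: cx c_def power2_eq_square)
  qed
  moreover have "X i x = c i * cnj (c x)" if "i \<in> S" for i
    using row[OF that] psd_on_hermitian[OF psd \<open>x \<in> S\<close> that] by (simp add: mult.commute)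
  moreover have "c = (\<lambda>_. 0)" if "c x = 0"
  proof -
    have "s = 0" using that cx by simp
    then show ?thesis by (simp add: c_def fun_eq_iff)
  qed
  ultimately show ?thesis by (rule that)
qed

lemma psd_on_schur_complement:
  assumes psd: "psd_on (insert x S) X" and S: "finite S" "x \<notin> S"
    and row: "\<And>j. j \<in> insert x S \<Longrightarrow> X x j = c x * cnj (c j)"
    and col: "\<And>i. i \<in> insert x S \<Longrightarrow> X i x = c i * cnj (c x)"
    and degenerate: "c x = 0 \<Longrightarrow> c = (\<lambda>_. 0)"
  shows "psd_on S (\<lambda>i j. X i j - c i * cnj (c j))" (is "psd_on S ?Y")
  unfolding psd_on_def
proof (intro conjI ballI allI)
  show "?Y j i = cnj (?Y i j)" if "i \<in> S" "j \<in> S" for i j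
    using psd_on_hermitian[OF psd, of i j] that by simp
next
  fix v
  define \<gamma> where "\<gamma> = (\<Sum>i\<in>S. cnj (v i) * c i)"
  obtain w where w: "cnj w * c x = - \<gamma>"
  proof (cases "c x = 0")
    case True
    then show ?thesis using that[of 0] degenerate by (simp add: \<gamma>_def)
  next
    case False
    then show ?thesis using that[of "- cnj \<gamma> / cnj (c x)"] by simp
  qed
  \<comment> \<open>The form of \<open>X\<close> at \<open>v(x := w)\<close> is that of \<open>?Y\<close> at \<open>v\<close> plus \<open>|cnj w * c x + \<gamma>|\<^sup>2\<close>, which \<open>w\<close> kills.\<close>
  define v' where "v' = v(x := w)"
  have "qform S X v = qform S ?Y v + \<gamma> * cnj \<gamma>"
    using qform_add[of S ?Y "\<lambda>i j. c i * cnj (c j)" v] by (simp add: qform_rank_one \<gamma>_def)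
  moreover have "qform S X v' = qform S X v"
    unfolding qform_def v'_def using S by (intro sum.cong refl) auto
  moreover have "(\<Sum>j\<in>S. X x j * v' j) = c x * cnj \<gamma>"
    unfolding \<gamma>_def v'_def cnj_sum sum_distrib_left using S row
    by (intro sum.cong refl) (auto simp: mult_ac)
  moreover have "(\<Sum>i\<in>S. cnj (v' i) * X i x) = \<gamma> * cnj (c x)"
    unfolding \<gamma>_def v'_def sum_distrib_right using S col
    by (intro sum.cong refl) (auto simp: mult_ac)
  ultimately have "qform (insert x S) X v' =
      qform S ?Y v + (cnj w * c x + \<gamma>) * cnj (cnj w * c x + \<gamma>)"
    using qform_insert[OF S, of X v'] row[of x] by (simp add: v'_def algebra_simps)
  then have "qform (insert x S) X v' = qform S ?Y v"
    unfolding w by simp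
  then show "0 \<le> Re (qform S ?Y v)"
    using psd_on_qform_nonneg[OF psd] by metis
qed

lemma psd_on_gram:
  assumes "finite S" "psd_on S X"
  shows "\<exists>(N::nat) cs. \<forall>i\<in>S. \<forall>j\<in>S. X i j = (\<Sum>r<N. cs r i * cnj (cs r j))"
  using assms
proof (induction S arbitrary: X rule: finite_induct)
  case empty
  then show ?case by simp
next
  case (insert x S)
  obtain c where row: "\<And>j. j \<in> insert x S \<Longrightarrow> X x j = c x * cnj (c j)"
    and col: "\<And>i. i \<in> insert x S \<Longrightarrow> X i x = c i * cnj (c x)"
    and degenerate: "c x = 0 \<Longrightarrow> c = (\<lambda>_. 0)"
    using psd_on_column_factor[OF insert.prems] insert.hyps(1) by blast
  have schur: "psd_on S (\<lambda>i j. X i j - c i * cnj (c j))"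
    using insert.prems insert.hyps row col degenerate by (rule psd_on_schur_complement)
  obtain N :: nat and cs where cs: "\<forall>i\<in>S. \<forall>j\<in>S. X i j - c i * cnj (c j) = (\<Sum>r<N. cs r i * cnj (cs r j))"
    using insert.IH[OF schur] by blast
  define cs' where "cs' r i = (if r < N then (if i = x then 0 else cs r i) else c i)" for r i
  have "X i j = (\<Sum>r<Suc N. cs' r i * cnj (cs' r j))" if "i \<in> insert x S" "j \<in> insert x S" for i j
  proof -
    have split: "(\<Sum>r<Suc N. cs' r i * cnj (cs' r j)) =
        (\<Sum>r<N. cs' r i * cnj (cs' r j)) + c i * cnj (c j)"
      by (simp add: cs'_def)
    show ?thesis
    proof (cases "i = x \<or> j = x")
      case True
      then show ?thesis
        unfolding split using row col that by (auto simp: cs'_def)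
    next
      case False
      then have "i \<in> S" "j \<in> S" using that by auto
      then have "(\<Sum>r<N. cs' r i * cnj (cs' r j)) = X i j - c i * cnj (c j)"
        using cs False by (simp add: cs'_def)
      then show ?thesis
        unfolding split by simp
    qed
  qed
  then show ?case by blast
qed

section \<open>Link product\<close>

lemma qform_link_product_rank_one:
  "qform (I \<times> P) (\<lambda>(i, p) (j, q). \<Sum>a\<in>A. \<Sum>b\<in>A. W (i, a) (j, b) * (c (a, p) * cnj (c (b, q)))) v =
    qform (I \<times> A) W (\<lambda>(i, a). \<Sum>p\<in>P. cnj (c (a, p)) * v (i, p))"
proof -
  define F where "F i p j q a b = cnj (v (i, p)) * W (i, a) (j, b) * c (a, p) * cnj (c (b, q)) * v (j, q)"
    for i p j q a b
  have "qform (I \<times> P) (\<lambda>(i, p) (j, q). \<Sum>a\<in>A. \<Sum>b\<in>A. W (i, a) (j, b) * (c (a, p) * cnj (c (b, q)))) v =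
      (\<Sum>i\<in>I. \<Sum>p\<in>P. \<Sum>j\<in>I. \<Sum>q\<in>P. \<Sum>a\<in>A. \<Sum>b\<in>A. F i p j q a b)"
    unfolding qform_def sum.cartesian_product' F_def
    by (simp add: sum_distrib_left sum_distrib_right mult_ac)
  also have "\<dots> = (\<Sum>i\<in>I. \<Sum>a\<in>A. \<Sum>j\<in>I. \<Sum>b\<in>A. \<Sum>p\<in>P. \<Sum>q\<in>P. F i p j q a b)"
    unfolding sum.cartesian_product
    by (rule sum.reindex_bij_witness[where i = "\<lambda>(i, a, j, b, p, q). (i, p, j, q, a, b)"
          and j = "\<lambda>(i, p, j, q, a, b). (i, a, j, b, p, q)"]) auto
  also have "\<dots> = qform (I \<times> A) W (\<lambda>(i, a). \<Sum>p\<in>P. cnj (c (a, p)) * v (i, p))"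
    unfolding qform_def sum.cartesian_product' F_def
    by (simp add: sum_distrib_left sum_distrib_right mult_ac)
  finally show ?thesis .
qed

lemma psd_on_link_product:
  assumes fin: "finite (A \<times> P)" and W: "psd_on (I \<times> A) W" and C: "psd_on (A \<times> P) C"
  shows "psd_on (I \<times> P) (\<lambda>(i, p) (j, q). \<Sum>a\<in>A. \<Sum>b\<in>A. W (i, a) (j, b) * C (a, p) (b, q))"
    (is "psd_on _ ?G")
  unfolding psd_on_def
proof (intro conjI ballI allI)
  fix x y assume "x \<in> I \<times> P" "y \<in> I \<times> P"
  then obtain i p j q where xy: "x = (i, p)" "y = (j, q)" "i \<in> I" "p \<in> P" "j \<in> I" "q \<in> P"
    by auto
  have "cnj (?G x y) = (\<Sum>a\<in>A. \<Sum>b\<in>A. W (j, b) (i, a) * C (b, q) (a, p))"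
    unfolding xy prod.case cnj_sum
  proof (intro sum.cong refl)
    fix a b assume "a \<in> A" "b \<in> A"
    then show "cnj (W (i, a) (j, b) * C (a, p) (b, q)) = W (j, b) (i, a) * C (b, q) (a, p)"
      using psd_on_hermitian[OF W, of "(i, a)" "(j, b)"] psd_on_hermitian[OF C, of "(a, p)" "(b, q)"] xy
      by simp
  qed
  also have "\<dots> = ?G y x"
    unfolding xy prod.case by (rule sum.swap)
  finally show "?G y x = cnj (?G x y)" by simp
next
  fix v
  obtain N :: nat and cs where gram: "\<forall>x\<in>A \<times> P. \<forall>y\<in>A \<times> P. C x y = (\<Sum>r<N. cs r x * cnj (cs r y))"
    using psd_on_gram[OF fin C] by blast
  define L where "L r = (\<lambda>(i, p) (j, q). \<Sum>a\<in>A. \<Sum>b\<in>A. W (i, a) (j, b) * (cs r (a, p) * cnj (cs r (b, q))))"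
    for r
  have "qform (I \<times> P) ?G v = qform (I \<times> P) (\<lambda>x y. \<Sum>r<N. L r x y) v"
    using gram by (intro qform_cong) (auto simp: L_def sum_distrib_left sum.swap[of _ "{..<N}"])
  also have "\<dots> = (\<Sum>r<N. qform (I \<times> A) W (\<lambda>(i, a). \<Sum>p\<in>P. cnj (cs r (a, p)) * v (i, p)))"
    unfolding qform_sum L_def qform_link_product_rank_one ..
  finally show "0 \<le> Re (qform (I \<times> P) ?G v)"
    using psd_on_qform_nonneg[OF W] by (simp add: sum_nonneg)
qed

section \<open>Block matrices\<close>

lemma block_index_eq_iff:
  fixes m :: nat
  assumes "a < m" "b < m"
  shows "i * m + a = j * m + b \<longleftrightarrow> i = j \<and> a = b"
proof
  assume eq: "i * m + a = j * m + b"
  have "(i * m + a) div m = (j * m + b) div m" "(i * m + a) mod m = (j * m + b) mod m"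
    unfolding eq by simp_all
  then show "i = j \<and> a = b" using assms by simp
qed simp

lemma block_index_less:
  fixes m :: nat
  assumes "i < k" "a < m"
  shows "i * m + a < k * m"
proof -
  have "i * m + a < Suc i * m" using assms by simp
  also have "\<dots> \<le> k * m" using assms by (intro mult_le_mono1) simp
  finally show ?thesis .
qed

lemma block_index_cases:
  fixes m :: nat
  assumes "I < k * m"
  obtains i a where "i < k" "a < m" "I = i * m + a"
proof
  show "I div m < k" using assms by (simp add: less_mult_imp_div_less)
  show "I mod m < m" using assms by (cases "m = 0") simp_all
  show "I = I div m * m + I mod m" by simp
qed

lemma bij_betw_block_index:
  "bij_betw (\<lambda>(i, a). i * m + a) ({..<k} \<times> {..<m}) {..<k * (m::nat)}"
proof (rule bij_betwI')
  fix x y assume "x \<in> {..<k} \<times> {..<m}" "y \<in> {..<k} \<times> {..<m}"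
  then show "((\<lambda>(i, a). i * m + a) x = (\<lambda>(i, a). i * m + a) y) = (x = y)"
    by (auto simp: block_index_eq_iff)
next
  show "(\<lambda>(i, a). i * m + a) x \<in> {..<k * m}" if "x \<in> {..<k} \<times> {..<m}" for x
    using that by (auto simp: block_index_less)
next
  fix I assume "I \<in> {..<k * m}"
  then obtain i a where "i < k" "a < m" "I = i * m + a"
    by (auto elim: block_index_cases)
  then show "\<exists>x\<in>{..<k} \<times> {..<m}. I = (\<lambda>(i, a). i * m + a) x"
    by auto
qed

lemma sum_block_index: "(\<Sum>I<k * m. f I) = (\<Sum>i<k. \<Sum>a<(m::nat). f (i * m + a))"
proof -
  have "(\<Sum>I<k * m. f I) = (\<Sum>x\<in>{..<k} \<times> {..<m}. f ((\<lambda>(i, a). i * m + a) x))"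
    by (rule sum.reindex_bij_betw[OF bij_betw_block_index, symmetric])
  then show ?thesis
    by (simp add: sum.cartesian_product')
qed

lemma block_carrier: "block k m V \<in> carrier_mat (k * m) (k * m)"
  by (simp add: block_def)

lemma index_block:
  "i < k \<Longrightarrow> a < m \<Longrightarrow> j < k \<Longrightarrow> b < m \<Longrightarrow> block k m V $$ (i * m + a, j * m + b) = V i j $$ (a, b)"
  by (simp add: block_def block_index_less)

lemma block_cong:
  "(\<And>i j. i < k \<Longrightarrow> j < k \<Longrightarrow> V i j = W i j) \<Longrightarrow> block k m V = block k m W"
  by (rule eq_matI) (auto simp: block_def less_mult_imp_div_less)

lemma index_blockdiag:
  "i < k \<Longrightarrow> a < m \<Longrightarrow> j < k \<Longrightarrow> b < m \<Longrightarrow>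
    blockdiag k m U $$ (i * m + a, j * m + b) = (if i = j then U $$ (a, b) else 0)"
  by (simp add: blockdiag_def index_block)

lemma adj_carrier: "A \<in> carrier_mat r s \<Longrightarrow> adj A \<in> carrier_mat s r"
  by (simp add: adj_def)

lemma index_adj: "A \<in> carrier_mat r s \<Longrightarrow> i < s \<Longrightarrow> j < r \<Longrightarrow> adj A $$ (i, j) = cnj (A $$ (j, i))"
  by (simp add: adj_def)

lemma index_mult_mat_sum:
  "A \<in> carrier_mat r s \<Longrightarrow> B \<in> carrier_mat s t \<Longrightarrow> i < r \<Longrightarrow> j < t \<Longrightarrow>
    (A * B) $$ (i, j) = (\<Sum>l<s. A $$ (i, l) * B $$ (l, j))"
  by (auto simp: scalar_prod_def atLeast0LessThan intro!: sum.cong)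

lemma adj_eq_self_iff:
  assumes "A \<in> carrier_mat N N"
  shows "adj A = A \<longleftrightarrow> (\<forall>i<N. \<forall>j<N. A $$ (j, i) = cnj (A $$ (i, j)))"
proof -
  have "adj A = A \<longleftrightarrow> (\<forall>i<N. \<forall>j<N. adj A $$ (i, j) = A $$ (i, j))"
    using assms adj_carrier[OF assms] by (simp add: mat_eq_iff)
  also have "\<dots> \<longleftrightarrow> (\<forall>i<N. \<forall>j<N. cnj (A $$ (j, i)) = A $$ (i, j))"
    using assms by (simp add: index_adj)
  also have "\<dots> \<longleftrightarrow> (\<forall>i<N. \<forall>j<N. A $$ (j, i) = cnj (A $$ (i, j)))"
    by (metis complex_cnj_cnj)
  finally show ?thesis .
qed

lemma psd_iff_psd_on:
  "psd N A \<longleftrightarrow> A \<in> carrier_mat N N \<and> psd_on {..<N} (\<lambda>i j. A $$ (i, j))"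
proof -
  have "A \<in> carrier_mat N N \<Longrightarrow>
      adj A = A \<longleftrightarrow> (\<forall>i\<in>{..<N}. \<forall>j\<in>{..<N}. A $$ (j, i) = cnj (A $$ (i, j)))"
    by (simp only: adj_eq_self_iff lessThan_iff Ball_def)
  then show ?thesis
    unfolding psd_def psd_on_def qform_def by blast
qed

lemma psd_block_iff:
  "psd (k * m) (block k m V) \<longleftrightarrow> psd_on ({..<k} \<times> {..<m}) (\<lambda>(i, a) (j, b). V i j $$ (a, b))"
proof -
  have "psd (k * m) (block k m V) \<longleftrightarrow>
      psd_on ({..<k} \<times> {..<m}) (\<lambda>x y. block k m V $$ ((\<lambda>(i, a). i * m + a) x, (\<lambda>(i, a). i * m + a) y))"
    using psd_on_reindex[OF bij_betw_block_index, where X = "\<lambda>I J. block k m V $$ (I, J)"]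
    by (simp add: psd_iff_psd_on block_carrier)
  also have "\<dots> \<longleftrightarrow> psd_on ({..<k} \<times> {..<m}) (\<lambda>(i, a) (j, b). V i j $$ (a, b))"
    by (intro psd_on_cong) (auto simp: index_block)
  finally show ?thesis .
qed

lemma psd_block_unit_mat: "psd (m * m) (block m m (unit_mat m))"
proof -
  define u :: "nat \<times> nat \<Rightarrow> complex" where "u = (\<lambda>(i, a). if i = a then 1 else 0)"
  have "psd_on ({..<m} \<times> {..<m}) (\<lambda>x y. u x * cnj (u y))"
    by (rule psd_on_rank_one)
  then show ?thesis
    unfolding psd_block_iff by (rule psd_on_cong[THEN iffD1, rotated]) (auto simp: u_def unit_mat_def)
qed

lemma adj_blockdiag_mult_block:
  assumes U: "U \<in> carrier_mat m m" and V: "\<And>i j. i < k \<Longrightarrow> j < k \<Longrightarrow> V i j \<in> carrier_mat m m"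
  shows "adj (blockdiag k m U) * block k m V = block k m (\<lambda>i j. adj U * V i j)"
proof (rule eq_matI)
  have D: "blockdiag k m U \<in> carrier_mat (k * m) (k * m)"
    by (simp add: blockdiag_def block_carrier)
  then show "dim_row (adj (blockdiag k m U) * block k m V) = dim_row (block k m (\<lambda>i j. adj U * V i j))"
    and "dim_col (adj (blockdiag k m U) * block k m V) = dim_col (block k m (\<lambda>i j. adj U * V i j))"
    using adj_carrier[OF D] by (simp_all add: block_def)
  fix I J
  assume "I < dim_row (block k m (\<lambda>i j. adj U * V i j))" "J < dim_col (block k m (\<lambda>i j. adj U * V i j))"
  then have IJ: "I < k * m" "J < k * m" by (simp_all add: block_def)
  then obtain i a j b where ia: "i < k" "a < m" "I = i * m + a" and jb: "j < k" "b < m" "J = j * m + b"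
    by (metis block_index_cases)
  have "(adj (blockdiag k m U) * block k m V) $$ (I, J) =
      (\<Sum>L<k * m. adj (blockdiag k m U) $$ (I, L) * block k m V $$ (L, J))"
    by (rule index_mult_mat_sum[OF adj_carrier[OF D] block_carrier IJ])
  also have "\<dots> =
      (\<Sum>l<k. \<Sum>c<m. adj (blockdiag k m U) $$ (i * m + a, l * m + c) * block k m V $$ (l * m + c, j * m + b))"
    unfolding sum_block_index ia(3) jb(3) ..
  also have "\<dots> = (\<Sum>l<k. \<Sum>c<m. if l = i then cnj (U $$ (c, a)) * V i j $$ (c, b) else 0)"
    using ia jb D by (intro sum.cong refl) (simp add: index_adj block_index_less index_blockdiag index_block)
  also have "\<dots> = (\<Sum>c<m. cnj (U $$ (c, a)) * V i j $$ (c, b))"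
    using ia by (subst sum.swap) simp
  also have "\<dots> = (adj U * V i j) $$ (a, b)"
    by (subst index_mult_mat_sum[OF adj_carrier[OF U] V[OF ia(1) jb(1)] ia(2) jb(2)])
       (simp add: index_adj[OF U] ia(2))
  also have "\<dots> = block k m (\<lambda>i j. adj U * V i j) $$ (I, J)"
    using ia jb by (simp add: index_block)
  finally show "(adj (blockdiag k m U) * block k m V) $$ (I, J) = block k m (\<lambda>i j. adj U * V i j) $$ (I, J)" .
qed

section \<open>Choi's theorem\<close>

lemma lin_map_mult_sandwich:
  assumes lin: "lin_map m n \<psi>" and A: "A \<in> carrier_mat m m" and B: "B \<in> carrier_mat n n"
  shows "lin_map m n (\<lambda>X. B * \<psi> (A * X))"
proof -
  have carrier: "\<And>X. X \<in> carrier_mat m m \<Longrightarrow> \<psi> X \<in> carrier_mat n n"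
    and add: "\<And>X Y. X \<in> carrier_mat m m \<Longrightarrow> Y \<in> carrier_mat m m \<Longrightarrow> \<psi> (X + Y) = \<psi> X + \<psi> Y"
    and smult: "\<And>c X. X \<in> carrier_mat m m \<Longrightarrow> \<psi> (c \<cdot>\<^sub>m X) = c \<cdot>\<^sub>m \<psi> X"
    using lin unfolding lin_map_def by auto
  show ?thesis
    unfolding lin_map_def
  proof (intro conjI ballI allI)
    fix X :: "complex mat" assume "X \<in> carrier_mat m m"
    then show "B * \<psi> (A * X) \<in> carrier_mat n n"
      using A B carrier by simp
  next
    fix X Y :: "complex mat" assume X: "X \<in> carrier_mat m m" and Y: "Y \<in> carrier_mat m m"
    then have "\<psi> (A * (X + Y)) = \<psi> (A * X) + \<psi> (A * Y)"
      using A add by (simp add: mult_add_distrib_mat)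
    then show "B * \<psi> (A * (X + Y)) = B * \<psi> (A * X) + B * \<psi> (A * Y)"
      using A B X Y carrier[of "A * X"] carrier[of "A * Y"] by (simp add: mult_add_distrib_mat)
  next
    fix c and X :: "complex mat" assume X: "X \<in> carrier_mat m m"
    then have "\<psi> (A * (c \<cdot>\<^sub>m X)) = c \<cdot>\<^sub>m \<psi> (A * X)"
      using A smult by (simp add: mult_smult_distrib)
    then show "B * \<psi> (A * (c \<cdot>\<^sub>m X)) = c \<cdot>\<^sub>m (B * \<psi> (A * X))"
      using A B X carrier[of "A * X"] by (simp add: mult_smult_distrib)
  qed
qed

lemma lin_map_index_expansion:
  assumes lin: "lin_map m n \<phi>" and X: "X \<in> carrier_mat m m" and pq: "p < n" "q < n"
  shows "\<phi> X $$ (p, q) = (\<Sum>a<m. \<Sum>b<m. X $$ (a, b) * \<phi> (unit_mat m a b) $$ (p, q))"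
proof -
  have carrier: "\<And>Y. Y \<in> carrier_mat m m \<Longrightarrow> \<phi> Y \<in> carrier_mat n n"
    and add: "\<And>Y Z. Y \<in> carrier_mat m m \<Longrightarrow> Z \<in> carrier_mat m m \<Longrightarrow> \<phi> (Y + Z) = \<phi> Y + \<phi> Z"
    and smult: "\<And>c Y. Y \<in> carrier_mat m m \<Longrightarrow> \<phi> (c \<cdot>\<^sub>m Y) = c \<cdot>\<^sub>m \<phi> Y"
    using lin unfolding lin_map_def by auto
  define part where "part T = mat m m (\<lambda>(a, b). if (a, b) \<in> T then X $$ (a, b) else 0)" for T
  have part_carrier: "part T \<in> carrier_mat m m" for T
    by (simp add: part_def)
  have expansion: "\<phi> (part T) $$ (p, q) = (\<Sum>(a, b)\<in>T. X $$ (a, b) * \<phi> (unit_mat m a b) $$ (p, q))"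
    if "finite T" for T
    using that
  proof (induction T rule: finite_induct)
    case empty
    have "part {} = 0 \<cdot>\<^sub>m X"
      using X by (intro eq_matI) (auto simp: part_def)
    then show ?case
      using smult[OF X, of 0] carrier[OF X] pq by simp
  next
    case (insert t T)
    obtain a b where t: "t = (a, b)" by fastforce
    have "part (insert t T) = part T + X $$ (a, b) \<cdot>\<^sub>m unit_mat m a b"
      using insert.hyps(2) by (intro eq_matI) (auto simp: part_def unit_mat_def t)
    then have "\<phi> (part (insert t T)) = \<phi> (part T) + X $$ (a, b) \<cdot>\<^sub>m \<phi> (unit_mat m a b)"
      by (simp add: add part_carrier smult unit_mat_def)
    then show ?case
      using insert carrier[of "unit_mat m a b"] pq by (simp add: t unit_mat_def)
  qed
  have "part ({..<m} \<times> {..<m}) = X"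
    using X by (intro eq_matI) (auto simp: part_def)
  then have "\<phi> X $$ (p, q) = (\<Sum>(a, b)\<in>{..<m} \<times> {..<m}. X $$ (a, b) * \<phi> (unit_mat m a b) $$ (p, q))"
    using expansion[of "{..<m} \<times> {..<m}"] by simp
  then show ?thesis
    by (simp add: sum.cartesian_product')
qed

definition completely_positive :: "nat \<Rightarrow> nat \<Rightarrow> (complex mat \<Rightarrow> complex mat) \<Rightarrow> bool" where
  "completely_positive m n \<phi> \<longleftrightarrow>
     (\<forall>k. \<forall>V :: nat \<Rightarrow> nat \<Rightarrow> complex mat.
        (\<forall>i<k. \<forall>j<k. V i j \<in> carrier_mat m m) \<and> psd (k * m) (block k m V) \<longrightarrow>
        psd (k * n) (block k n (\<lambda>i j. \<phi> (V i j))))"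

lemma completely_positive_iff_choi_psd:
  assumes lin: "lin_map m n \<phi>"
  shows "completely_positive m n \<phi> \<longleftrightarrow> psd (m * n) (block m n (\<lambda>a b. \<phi> (unit_mat m a b)))"
proof
  assume "completely_positive m n \<phi>"
  moreover have "unit_mat m a b \<in> carrier_mat m m" for a b
    by (simp add: unit_mat_def)
  ultimately show "psd (m * n) (block m n (\<lambda>a b. \<phi> (unit_mat m a b)))"
    using psd_block_unit_mat unfolding completely_positive_def by blast
next
  assume choi: "psd (m * n) (block m n (\<lambda>a b. \<phi> (unit_mat m a b)))"
  show "completely_positive m n \<phi>"
    unfolding completely_positive_def
  proof (intro allI impI, elim conjE)
    fix k and W :: "nat \<Rightarrow> nat \<Rightarrow> complex mat"
    assume carrier: "\<forall>i<k. \<forall>j<k. W i j \<in> carrier_mat m m" and psd_W: "psd (k * m) (block k m W)"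
    have "psd_on ({..<k} \<times> {..<n})
        (\<lambda>(i, p) (j, q). \<Sum>a\<in>{..<m}. \<Sum>b\<in>{..<m}.
           (\<lambda>(i, a) (j, b). W i j $$ (a, b)) (i, a) (j, b) *
           (\<lambda>(a, p) (b, q). \<phi> (unit_mat m a b) $$ (p, q)) (a, p) (b, q))"
      using choi psd_W unfolding psd_block_iff by (intro psd_on_link_product) simp_all
    then have "psd_on ({..<k} \<times> {..<n}) (\<lambda>(i, p) (j, q). \<phi> (W i j) $$ (p, q))"
      by (rule psd_on_cong[THEN iffD1, rotated])
         (auto simp: lin_map_index_expansion[OF lin] carrier)
    then show "psd (k * n) (block k n (\<lambda>i j. \<phi> (W i j)))"
      unfolding psd_block_iff .
  qed
qed

lemma unitary_mat_cancel:
  assumes U: "unitary_mat m U" and X: "X \<in> carrier_mat m m"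
  shows "adj U * (U * X) = X" "U * (adj U * X) = X"
proof -
  have U_carrier: "U \<in> carrier_mat m m" and "adj U * U = 1\<^sub>m m" "U * adj U = 1\<^sub>m m"
    using U unfolding unitary_mat_def by auto
  moreover have "adj U * (U * X) = (adj U * U) * X" "U * (adj U * X) = (U * adj U) * X"
    using assoc_mult_mat[OF adj_carrier[OF U_carrier] U_carrier X]
      assoc_mult_mat[OF U_carrier adj_carrier[OF U_carrier] X] by simp_all
  ultimately show "adj U * (U * X) = X" "U * (adj U * X) = X"
    using X by simp_all
qed

lemma UCP_iff_completely_positive:
  assumes UA: "unitary_mat m UA" and UB: "UB \<in> carrier_mat n n"
    and carrier: "\<And>X. X \<in> carrier_mat m m \<Longrightarrow> \<psi> X \<in> carrier_mat n n"
  shows "UCP m n UA UB \<psi> \<longleftrightarrow> completely_positive m n (\<lambda>X. adj UB * \<psi> (UA * X))"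
proof -
  have UA_carrier: "UA \<in> carrier_mat m m"
    using UA unfolding unitary_mat_def by simp
  have conj_psi: "adj (blockdiag k n UB) * block k n (\<lambda>i j. \<psi> (V i j)) = block k n (\<lambda>i j. adj UB * \<psi> (V i j))"
    if "\<forall>i<k. \<forall>j<k. V i j \<in> carrier_mat m m" for k V
    using that by (intro adj_blockdiag_mult_block UB carrier) simp
  show ?thesis
    unfolding UCP_def completely_positive_def
  proof (intro iffI allI impI; elim conjE)
    fix k W
    assume ucp: "\<forall>k V. (\<forall>i<k. \<forall>j<k. V i j \<in> carrier_mat m m) \<and> psd (k * m) (adj (blockdiag k m UA) * block k m V) \<longrightarrow>
        psd (k * n) (adj (blockdiag k n UB) * block k n (\<lambda>i j. \<psi> (V i j)))"
      and W: "\<forall>i<k. \<forall>j<k. W i j \<in> carrier_mat m m" and psd_W: "psd (k * m) (block k m W)"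
    have V: "\<forall>i<k. \<forall>j<k. UA * W i j \<in> carrier_mat m m"
      using W UA_carrier by simp
    have "adj (blockdiag k m UA) * block k m (\<lambda>i j. UA * W i j) =
        block k m (\<lambda>i j. adj UA * (UA * W i j))"
      using V by (intro adj_blockdiag_mult_block UA_carrier) simp
    also have "\<dots> = block k m W"
      using W by (intro block_cong) (simp add: unitary_mat_cancel[OF UA])
    finally have "psd (k * m) (adj (blockdiag k m UA) * block k m (\<lambda>i j. UA * W i j))"
      using psd_W by simp
    then have "psd (k * n) (adj (blockdiag k n UB) * block k n (\<lambda>i j. \<psi> (UA * W i j)))"
      by (rule ucp[rule_format, OF conjI[OF V]])
    then show "psd (k * n) (block k n (\<lambda>i j. adj UB * \<psi> (UA * W i j)))"
      using conj_psi[OF V] by simp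
  next
    fix k V
    assume cp: "\<forall>k W. (\<forall>i<k. \<forall>j<k. W i j \<in> carrier_mat m m) \<and> psd (k * m) (block k m W) \<longrightarrow>
        psd (k * n) (block k n (\<lambda>i j. adj UB * \<psi> (UA * W i j)))"
      and V: "\<forall>i<k. \<forall>j<k. V i j \<in> carrier_mat m m"
      and psd_V: "psd (k * m) (adj (blockdiag k m UA) * block k m V)"
    have W: "\<forall>i<k. \<forall>j<k. adj UA * V i j \<in> carrier_mat m m"
      using V adj_carrier[OF UA_carrier] by simp
    have "psd (k * m) (block k m (\<lambda>i j. adj UA * V i j))"
      using psd_V adj_blockdiag_mult_block[OF UA_carrier, of k V] V by simp
    then have "psd (k * n) (block k n (\<lambda>i j. adj UB * \<psi> (UA * (adj UA * V i j))))"
      by (rule cp[rule_format, OF conjI[OF W]])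
    also have "block k n (\<lambda>i j. adj UB * \<psi> (UA * (adj UA * V i j))) =
        block k n (\<lambda>i j. adj UB * \<psi> (V i j))"
      using V by (intro block_cong) (simp add: unitary_mat_cancel[OF UA])
    also have "\<dots> = adj (blockdiag k n UB) * block k n (\<lambda>i j. \<psi> (V i j))"
      using conj_psi[OF V] by simp
    finally show "psd (k * n) (adj (blockdiag k n UB) * block k n (\<lambda>i j. \<psi> (V i j)))" .
  qed
qed

theorem theorem3p2:
  fixes m n :: nat and UA UB :: "complex mat" and \<psi> :: "complex mat \<Rightarrow> complex mat"
  assumes "unitary_mat m UA" and "unitary_mat n UB" and "lin_map m n \<psi>"
  shows "UCP m n UA UB \<psi> \<longleftrightarrow>
         psd (m*n) (block m n (\<lambda>i j. adj UB * \<psi> (UA * unit_mat m i j)))"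
proof -
  have UA: "UA \<in> carrier_mat m m" and UB: "UB \<in> carrier_mat n n"
    using assms(1,2) unfolding unitary_mat_def by auto
  have "UCP m n UA UB \<psi> \<longleftrightarrow> completely_positive m n (\<lambda>X. adj UB * \<psi> (UA * X))"
    using assms(1,3) UB unfolding lin_map_def by (intro UCP_iff_completely_positive) auto
  also have "\<dots> \<longleftrightarrow> psd (m*n) (block m n (\<lambda>i j. adj UB * \<psi> (UA * unit_mat m i j)))"
    using lin_map_mult_sandwich[OF assms(3) UA adj_carrier[OF UB]]
    by (rule completely_positive_iff_choi_psd)
  finally show ?thesis .
qed

end
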